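(* Let $n$ be a positive integer and $\alpha,\beta\in\mathbb{R}$ with $\alpha>\beta$. Then $A_n^{\alpha,\beta}$ is symmetric positive definite, and its smallest eigenvalue $\lambda_1^{n,\alpha,\beta}$ satisfies \[ \lambda_1^{n,\alpha,\beta}\ \ge\ t_n\cdot \min_{1\le i\le n}J_{\alpha-\beta}(i)\cdot \min\{1,n^{2\beta}\}\ >\ 0 . \]
   Context: For $i,j$ positive integers, $(i,j)$ denotes the greatest common divisor and $[i,j]$ the least common multiple. For $\alpha,\beta\in\mathbb{R}$ and a positive integer $n$, $A_n^{\alpha,\beta}$ is the $n\times n$ real matrix with $(i,j)$ entry $(i,j)^{\alpha}[i,j]^{\beta}$. $E_n$ is the $n\times n$ matrix with $(E_n)_{ij}=1$ if $j\mid i$ and $(E_n)_{ij}=0$ otherwise; $t_n$ denotes the smallest eigenvalue and $T_n$ the largest eigenvalue of the symmetric matrix $E_n^{T}E_n$. For real $s$, $J_s$ is the arithmetical function $J_s(k)=k^{s}\prod_{p\mid k}\left(1-p^{-s}\right)$ (product over primes $p$ dividing $k$), equivalently $J_s(k)=\sum_{d\mid k} d^{s}\mu(k/d)$ where $\mu$ is the Möbius function. *)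

theory Defs
  imports Complex_Main "HOL-Computational_Algebra.Primes" "Jordan_Normal_Form.Matrix" "Jordan_Normal_Form.Char_Poly"
begin

text \<open>Matrices are n x n JNF matrices, rows/columns indexed 0..n-1; entry (i,j) corresponds to
  the paper's entry (i+1, j+1).\<close>

definition A_mat :: "nat \<Rightarrow> real \<Rightarrow> real \<Rightarrow> real mat" where
  "A_mat n \<alpha> \<beta> = mat n n (\<lambda>(i,j). real (gcd (i+1) (j+1)) powr \<alpha> * real (lcm (i+1) (j+1)) powr \<beta>)"

definition E_mat :: "nat \<Rightarrow> real mat" where
  "E_mat n = mat n n (\<lambda>(i,j). if (j+1) dvd (i+1) then 1 else 0)"

definition symmetric_mat :: "real mat \<Rightarrow> bool" where
  "symmetric_mat A \<longleftrightarrow> dim_row A = dim_col A \<and> transpose_mat A = A"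

definition pos_def_mat :: "real mat \<Rightarrow> bool" where
  "pos_def_mat A \<longleftrightarrow> symmetric_mat A \<and>
     (\<forall>x \<in> carrier_vec (dim_row A). x \<noteq> 0\<^sub>v (dim_row A) \<longrightarrow> x \<bullet> (A *\<^sub>v x) > 0)"

text \<open>Smallest eigenvalue (meaningful for real symmetric matrices, whose eigenvalues are all real).\<close>
definition min_eigenvalue :: "real mat \<Rightarrow> real" where
  "min_eigenvalue A = Min {k. eigenvalue A k}"

definition t_min :: "nat \<Rightarrow> real" where
  "t_min n = min_eigenvalue (transpose_mat (E_mat n) * E_mat n)"

definition Jordan_tot :: "real \<Rightarrow> nat \<Rightarrow> real" where
  "Jordan_tot s k = real k powr s * (\<Prod>p\<in>prime_factors k. (1 - real p powr (-s)))"

end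

theory Submission
  imports Defs "HOL-Analysis.Function_Topology"
begin

(* Since (i,j)[i,j] = ij, the entry is  i^beta j^beta (i,j)^(alpha-beta),  and
   (i,j)^s = sum_{d | i, d | j} J_s(d) for the Jordan totient J_s.  Hence
   A = Lambda E D E^T Lambda  with  Lambda = diag(i^beta), D = diag(J_s(d)) and the divisibility
   matrix E, so with y = Lambda x
     x^T A x = sum_d J_s(d) (E^T y)_d^2 >= (min J_s) |E^T y|^2 >= (min J_s) t_n |y|^2
             >= (min J_s) t_n min(1, n^(2 beta)) |x|^2,
   where t_n = lambda_min(E^T E) > 0 because E is unitriangular.  The Rayleigh principle then
   turns this uniform bound into a bound for the smallest eigenvalue. *)

section \<open>Rayleigh principle for symmetric forms on \<open>\<real>\<^sup>n\<close>\<close>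

text \<open>Vectors of \<open>\<real>\<^sup>n\<close> are represented by functions \<open>nat \<Rightarrow> real\<close> of which only the
  first \<open>n\<close> values matter.\<close>

definition quad_form :: "nat \<Rightarrow> (nat \<Rightarrow> nat \<Rightarrow> real) \<Rightarrow> (nat \<Rightarrow> real) \<Rightarrow> real" where
  "quad_form n M x = (\<Sum>i<n. \<Sum>j<n. x i * M i j * x j)"

definition sq_norm :: "nat \<Rightarrow> (nat \<Rightarrow> real) \<Rightarrow> real" where
  "sq_norm n x = (\<Sum>i<n. (x i)\<^sup>2)"

lemma sq_norm_nonneg: "sq_norm n x \<ge> 0"
  unfolding sq_norm_def by (intro sum_nonneg) auto

lemma sq_norm_eq_0_iff: "sq_norm n x = 0 \<longleftrightarrow> (\<forall>i<n. x i = 0)"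
  unfolding sq_norm_def by (subst sum_nonneg_eq_0_iff) auto

lemma quad_form_scale:
  "quad_form n M (\<lambda>i. c * x i) = c\<^sup>2 * quad_form n M x"
  unfolding quad_form_def by (simp add: sum_distrib_left power2_eq_square algebra_simps)

lemma sq_norm_scale: "sq_norm n (\<lambda>i. c * x i) = c\<^sup>2 * sq_norm n x"
  unfolding sq_norm_def by (simp add: sum_distrib_left power_mult_distrib)

lemma quad_form_cong:
  assumes "\<And>i. i < n \<Longrightarrow> x i = y i"
  shows "quad_form n M x = quad_form n M y"
  unfolding quad_form_def using assms by (intro sum.cong refl) auto

lemma sq_norm_cong:
  assumes "\<And>i. i < n \<Longrightarrow> x i = y i"
  shows "sq_norm n x = sq_norm n y"
  unfolding sq_norm_def using assms by (intro sum.cong refl) auto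

lemma continuous_on_quad_form: "continuous_on S (quad_form n M)"
  unfolding quad_form_def [abs_def]
  by (intro continuous_intros continuous_on_product_then_coordinatewise continuous_on_id)

lemma closed_unit_sphere: "closed {x. sq_norm n x = 1}"
proof -
  have "continuous_on UNIV (sq_norm n)" unfolding sq_norm_def [abs_def]
    by (intro continuous_intros continuous_on_product_then_coordinatewise continuous_on_id)
  thus ?thesis by (intro closed_Collect_eq) (auto intro: continuous_on_const)
qed

text \<open>The unit sphere of \<open>\<real>\<^sup>n\<close>, seen inside \<open>nat \<Rightarrow> real\<close>, lies in this compact box.\<close>
lemma compact_box:
  "compact (Pi UNIV (\<lambda>i. if i < n then {-1..1::real} else {0}))"
proof -
  have "compactin (product_topology (\<lambda>_. euclidean) UNIV)
          (PiE UNIV (\<lambda>i. if i < n then {-1..1::real} else {0}))"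
    by (subst compactin_PiE) auto
  thus ?thesis by (simp add: euclidean_product_topology PiE_UNIV_domain)
qed

text \<open>The form attains its minimum \<open>q(u)\<close> on the unit sphere; by homogeneity
  \<open>q(u) \<parallel>x\<parallel>\<^sup>2 \<le> q(x)\<close> for all \<open>x\<close>.\<close>
lemma quad_form_attains_min_on_sphere:
  assumes "n \<ge> 1"
  obtains u where "sq_norm n u = 1" "\<And>x. quad_form n M u * sq_norm n x \<le> quad_form n M x"
proof -
  define S where "S = Pi UNIV (\<lambda>i. if i < n then {-1..1::real} else {0}) \<inter> {x. sq_norm n x = 1}"
  have "compact S" unfolding S_def using compact_box closed_unit_sphere by blast
  have "sq_norm n (\<lambda>i. if i = 0 then 1 else 0) = 1"
  proof -
    have "sq_norm n (\<lambda>i. if i = 0 then 1 else 0) = (\<Sum>i<n. if i = 0 then 1 else 0)"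
      unfolding sq_norm_def by (intro sum.cong) auto
    thus ?thesis using assms by simp
  qed
  hence "(\<lambda>i. if i = 0 then 1 else 0) \<in> S" using assms by (auto simp: S_def)
  hence "S \<noteq> {}" by auto
  then obtain u where uS: "u \<in> S" and umin: "\<And>y. y \<in> S \<Longrightarrow> quad_form n M u \<le> quad_form n M y"
    using continuous_attains_inf[OF \<open>compact S\<close> _ continuous_on_quad_form] by blast
  have "quad_form n M u * sq_norm n x \<le> quad_form n M x" for x
  proof (cases "sq_norm n x = 0")
    case True
    hence "quad_form n M x = 0" by (auto simp: sq_norm_eq_0_iff quad_form_def)
    thus ?thesis using True by simp
  next
    case False
    define r where "r = sqrt (sq_norm n x)"
    have xpos: "sq_norm n x > 0" using False sq_norm_nonneg[of n x] by simp
    hence r2: "r\<^sup>2 = sq_norm n x" and rpos: "r > 0" by (auto simp: r_def)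
    define y where "y i = (if i < n then x i / r else 0)" for i
    have y_scaled: "i < n \<Longrightarrow> y i = inverse r * x i" for i by (simp add: y_def field_simps)
    have "sq_norm n y = 1"
      using rpos by (simp add: sq_norm_cong[OF y_scaled] sq_norm_scale r2 [symmetric] power_inverse)
    moreover have "\<bar>y i\<bar> \<le> 1" if "i < n" for i
    proof -
      have "(y i)\<^sup>2 \<le> sq_norm n y" unfolding sq_norm_def using that by (intro member_le_sum) auto
      thus ?thesis using \<open>sq_norm n y = 1\<close> by (simp add: abs_square_le_1)
    qed
    moreover have "y i = 0" if "\<not> i < n" for i using that by (simp add: y_def)
    ultimately have "y \<in> S" by (auto simp: S_def abs_le_iff)
    hence "quad_form n M u \<le> quad_form n M y" by (rule umin)
    also have "\<dots> = quad_form n M x / r\<^sup>2"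
      by (simp add: quad_form_cong[OF y_scaled] quad_form_scale power_inverse divide_inverse)
    finally show ?thesis using xpos r2 by (simp add: pos_le_divide_eq)
  qed
  thus ?thesis using uS that by (auto simp: S_def)
qed

lemma linear_dominates_quadratic:
  fixes a b :: real
  assumes nonneg: "\<And>t. 0 \<le> t * a + t\<^sup>2 * b"
  shows "a = 0"
proof -
  define c where "c = \<bar>b\<bar> + 1"
  have c: "c > 0" "b \<le> c - 1" by (auto simp: c_def)
  define t where "t = - a / c"
  have "c\<^sup>2 * (t * a + t\<^sup>2 * b) = a\<^sup>2 * (b - c)"
    using c by (simp add: t_def field_simps power2_eq_square)
  also have "\<dots> \<le> - a\<^sup>2" using c by (simp add: mult_left_mono[of "b - c" "-1" "a\<^sup>2", simplified])
  finally have "0 \<le> - a\<^sup>2" using nonneg[of t] c by (smt (verit) mult_nonneg_nonneg zero_le_power2)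
  thus ?thesis by simp
qed

lemma quad_form_perturb:
  assumes sym: "\<And>i j. i < n \<Longrightarrow> j < n \<Longrightarrow> K i j = K j i"
  shows "quad_form n K (\<lambda>i. u i + t * w i) = quad_form n K u
           + 2 * t * (\<Sum>i<n. w i * (\<Sum>j<n. K i j * u j)) + t\<^sup>2 * quad_form n K w"
proof -
  have swap: "(\<Sum>i<n. \<Sum>j<n. u i * K i j * w j) = (\<Sum>i<n. \<Sum>j<n. w i * K i j * u j)"
    by (subst sum.swap) (auto intro!: sum.cong simp: sym mult.commute mult.left_commute)
  have "quad_form n K (\<lambda>i. u i + t * w i) = quad_form n K u
           + t * (\<Sum>i<n. \<Sum>j<n. u i * K i j * w j) + t * (\<Sum>i<n. \<Sum>j<n. w i * K i j * u j)
           + t\<^sup>2 * quad_form n K w"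
    unfolding quad_form_def
    by (simp add: algebra_simps sum.distrib sum_distrib_left power2_eq_square)
  thus ?thesis unfolding swap by (simp add: sum_distrib_left mult.assoc)
qed

text \<open>A positive semidefinite symmetric form vanishes at \<open>u\<close> only if \<open>u\<close> lies in its kernel:
  perturbing \<open>u\<close> in the direction \<open>K u\<close> would otherwise make the form negative.\<close>
lemma psd_null_vector_in_kernel:
  assumes sym: "\<And>i j. i < n \<Longrightarrow> j < n \<Longrightarrow> K i j = K j i"
    and psd: "\<And>x. quad_form n K x \<ge> 0"
    and null: "quad_form n K u = 0"
    and i: "i < n"
  shows "(\<Sum>j<n. K i j * u j) = 0"
proof -
  define w where "w i = (\<Sum>j<n. K i j * u j)" for i
  have cross: "(\<Sum>i<n. w i * (\<Sum>j<n. K i j * u j)) = sq_norm n w"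
    by (simp add: sq_norm_def w_def power2_eq_square)
  have "0 \<le> quad_form n K (\<lambda>i. u i + t * w i)" for t by (rule psd)
  moreover have "quad_form n K (\<lambda>i. u i + t * w i) = t * (2 * sq_norm n w) + t\<^sup>2 * quad_form n K w"
    for t by (simp add: quad_form_perturb[OF sym, where u=u and t=t and w=w] null cross)
  ultimately have "0 \<le> t * (2 * sq_norm n w) + t\<^sup>2 * quad_form n K w" for t by metis
  hence "sq_norm n w = 0" using linear_dominates_quadratic by fastforce
  thus ?thesis using i by (simp add: sq_norm_eq_0_iff w_def)
qed

lemma quad_form_shift:
  "quad_form n (\<lambda>i j. M i j - (if i = j then \<mu> else 0)) x = quad_form n M x - \<mu> * sq_norm n x"
proof -
  have row: "(\<Sum>j<n. x i * (M i j - (if i = j then \<mu> else 0)) * x j)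
               = (\<Sum>j<n. x i * M i j * x j) - \<mu> * (x i)\<^sup>2" if "i < n" for i
  proof -
    have "(\<Sum>j<n. x i * (M i j - (if i = j then \<mu> else 0)) * x j)
            = (\<Sum>j<n. x i * M i j * x j - (if j = i then \<mu> * (x i)\<^sup>2 else 0))"
      by (intro sum.cong) (auto simp: algebra_simps power2_eq_square)
    thus ?thesis using that by (simp add: sum_subtractf)
  qed
  have "quad_form n (\<lambda>i j. M i j - (if i = j then \<mu> else 0)) x
          = (\<Sum>i<n. (\<Sum>j<n. x i * M i j * x j) - \<mu> * (x i)\<^sup>2)"
    unfolding quad_form_def by (intro sum.cong refl row) simp
  also have "\<dots> = quad_form n M x - \<mu> * sq_norm n x"
    by (simp add: quad_form_def sq_norm_def sum_subtractf sum_distrib_left)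
  finally show ?thesis .
qed

lemma symmetric_form_min_eigenpair:
  assumes sym: "\<And>i j. i < n \<Longrightarrow> j < n \<Longrightarrow> M i j = M j i" and n: "n \<ge> 1"
  shows "\<exists>u \<mu>. sq_norm n u = 1 \<and> (\<forall>i<n. (\<Sum>j<n. M i j * u j) = \<mu> * u i) \<and>
           (\<forall>x. \<mu> * sq_norm n x \<le> quad_form n M x)"
proof -
  obtain u where u: "sq_norm n u = 1" and umin: "\<And>x. quad_form n M u * sq_norm n x \<le> quad_form n M x"
    using quad_form_attains_min_on_sphere[OF n] by blast
  define \<mu> where "\<mu> = quad_form n M u"
  define K where "K = (\<lambda>i j. M i j - (if i = j then \<mu> else 0))"
  have "(\<Sum>j<n. K i j * u j) = 0" if "i < n" for i
  proof (rule psd_null_vector_in_kernel[OF _ _ _ that])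
    show "K i j = K j i" if "i < n" "j < n" for i j using that sym by (auto simp: K_def)
    show "0 \<le> quad_form n K x" for x using umin[of x] by (simp add: K_def quad_form_shift \<mu>_def)
    show "quad_form n K u = 0" using u by (simp add: K_def quad_form_shift \<mu>_def)
  qed
  moreover have "(\<Sum>j<n. K i j * u j) = (\<Sum>j<n. M i j * u j) - \<mu> * u i" if "i < n" for i
  proof -
    have "(\<Sum>j<n. K i j * u j) = (\<Sum>j<n. M i j * u j - (if j = i then \<mu> * u i else 0))"
      by (intro sum.cong) (auto simp: K_def left_diff_distrib)
    thus ?thesis using that by (simp add: sum_subtractf)
  qed
  ultimately show ?thesis using u umin by (intro exI[of _ u] exI[of _ \<mu>]) (simp add: \<mu>_def)
qed

section \<open>Smallest eigenvalues of real symmetric matrices\<close>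

lemma quad_form_mat:
  fixes M :: "real mat"
  assumes "M \<in> carrier_mat n n" and "v \<in> carrier_vec n"
  shows "v \<bullet> (M *\<^sub>v v) = quad_form n (\<lambda>i j. M $$ (i, j)) (\<lambda>i. v $ i)"
  using assms by (simp add: quad_form_def scalar_prod_def sum_distrib_left atLeast0LessThan algebra_simps)

lemma sq_norm_vec:
  fixes v :: "real Matrix.vec"
  assumes "v \<in> carrier_vec n"
  shows "v \<bullet> v = sq_norm n (\<lambda>i. v $ i)"
  using assms by (simp add: sq_norm_def scalar_prod_def atLeast0LessThan power2_eq_square)

lemma scalar_prod_self_pos:
  fixes v :: "real Matrix.vec"
  assumes v: "v \<in> carrier_vec n" and nz: "v \<noteq> 0\<^sub>v n"
  shows "v \<bullet> v > 0"
proof -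
  obtain i where "i < n" "v $ i \<noteq> 0" using nz v by (metis eq_vecI carrier_vecD index_zero_vec)
  hence "sq_norm n (\<lambda>i. v $ i) \<noteq> 0" by (auto simp: sq_norm_eq_0_iff)
  hence "sq_norm n (\<lambda>i. v $ i) > 0" using sq_norm_nonneg[of n "\<lambda>i. v $ i"] by linarith
  thus ?thesis by (simp add: sq_norm_vec[OF v])
qed

text \<open>A real matrix has finitely many eigenvalues (roots of its characteristic polynomial),
  so \<open>min_eigenvalue\<close> is a genuine minimum.\<close>
lemma finite_eigenvalues:
  fixes M :: "real mat"
  assumes M: "M \<in> carrier_mat n n"
  shows "finite {k. eigenvalue M k}"
proof -
  have "char_poly M \<noteq> 0" using degree_monic_char_poly[OF M] by auto
  hence "finite {k. poly (char_poly M) k = 0}" by (rule poly_roots_finite)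
  thus ?thesis using eigenvalue_root_char_poly[OF M] by simp
qed

lemma min_eigenvalue_le:
  assumes "M \<in> carrier_mat n n" and "eigenvalue M k"
  shows "min_eigenvalue M \<le> k"
  unfolding min_eigenvalue_def by (intro Min_le finite_eigenvalues[OF assms(1)]) (use assms(2) in simp)

lemma min_eigenvalue_rayleigh:
  fixes M :: "real mat"
  assumes M: "M \<in> carrier_mat n n" and sym: "transpose_mat M = M" and n: "n \<ge> 1"
  shows "eigenvalue M (min_eigenvalue M)"
    and "\<And>x. x \<in> carrier_vec n \<Longrightarrow> min_eigenvalue M * (x \<bullet> x) \<le> x \<bullet> (M *\<^sub>v x)"
proof -
  have sym_entries: "M $$ (i, j) = M $$ (j, i)" if "i < n" "j < n" for i j
    using that M arg_cong[OF sym, of "\<lambda>A. A $$ (i, j)"] by auto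
  obtain u \<mu> where u: "sq_norm n u = 1"
    and eigen: "\<forall>i<n. (\<Sum>j<n. M $$ (i, j) * u j) = \<mu> * u i"
    and bound: "\<forall>x. \<mu> * sq_norm n x \<le> quad_form n (\<lambda>i j. M $$ (i, j)) x"
    using symmetric_form_min_eigenpair[of n "\<lambda>i j. M $$ (i, j)", OF sym_entries n] by blast
  define v where "v = Matrix.vec n u"
  have v: "v \<in> carrier_vec n" unfolding v_def by simp
  have "v \<noteq> 0\<^sub>v n"
  proof
    assume "v = 0\<^sub>v n"
    hence "\<forall>i<n. u i = 0" unfolding v_def by (metis index_vec index_zero_vec(1))
    hence "sq_norm n u = 0" by (simp add: sq_norm_eq_0_iff)
    thus False using u by simp
  qed
  moreover have "M *\<^sub>v v = \<mu> \<cdot>\<^sub>v v"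
    by (rule eq_vecI) (use M eigen in \<open>auto simp: v_def scalar_prod_def atLeast0LessThan\<close>)
  ultimately have eig: "eigenvalue M \<mu>" unfolding eigenvalue_def eigenvector_def using v M by auto
  have rayleigh: "\<mu> * (x \<bullet> x) \<le> x \<bullet> (M *\<^sub>v x)" if x: "x \<in> carrier_vec n" for x
    unfolding quad_form_mat[OF M x] sq_norm_vec[OF x] using bound by blast
  have "\<mu> \<le> k" if k: "eigenvalue M k" for k
  proof -
    obtain w where w: "w \<in> carrier_vec n" "w \<noteq> 0\<^sub>v n" "M *\<^sub>v w = k \<cdot>\<^sub>v w"
      using k M unfolding eigenvalue_def eigenvector_def by auto
    have "\<mu> * (w \<bullet> w) \<le> w \<bullet> (M *\<^sub>v w)" by (rule rayleigh[OF w(1)])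
    also have "\<dots> = k * (w \<bullet> w)" unfolding w(3) using w(1) by simp
    finally show ?thesis using scalar_prod_self_pos[OF w(1,2)] by simp
  qed
  hence "min_eigenvalue M = \<mu>" unfolding min_eigenvalue_def
    using eig finite_eigenvalues[OF M] by (intro Min_eqI) auto
  thus "eigenvalue M (min_eigenvalue M)"
    and "\<And>x. x \<in> carrier_vec n \<Longrightarrow> min_eigenvalue M * (x \<bullet> x) \<le> x \<bullet> (M *\<^sub>v x)"
    using eig rayleigh by simp_all
qed

lemma min_eigenvalue_ge:
  fixes M :: "real mat"
  assumes M: "M \<in> carrier_mat n n" and sym: "transpose_mat M = M" and n: "n \<ge> 1"
    and bound: "\<And>x. x \<in> carrier_vec n \<Longrightarrow> c * (x \<bullet> x) \<le> x \<bullet> (M *\<^sub>v x)"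
  shows "c \<le> min_eigenvalue M"
proof -
  obtain v where v: "v \<in> carrier_vec n" "v \<noteq> 0\<^sub>v n" "M *\<^sub>v v = min_eigenvalue M \<cdot>\<^sub>v v"
    using min_eigenvalue_rayleigh(1)[OF M sym n] M unfolding eigenvalue_def eigenvector_def by auto
  have "c * (v \<bullet> v) \<le> v \<bullet> (M *\<^sub>v v)" by (rule bound[OF v(1)])
  also have "\<dots> = min_eigenvalue M * (v \<bullet> v)" unfolding v(3) using v(1) by simp
  finally show ?thesis using scalar_prod_self_pos[OF v(1,2)] by simp
qed

section \<open>Gram matrices\<close>

lemma gram_quad_form:
  fixes B :: "real mat"
  assumes B: "B \<in> carrier_mat n n" and u: "u \<in> carrier_vec n"
  shows "u \<bullet> ((transpose_mat B * B) *\<^sub>v u) = (B *\<^sub>v u) \<bullet> (B *\<^sub>v u)"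
proof -
  have "u \<bullet> ((transpose_mat B * B) *\<^sub>v u) = (transpose_mat B *\<^sub>v (B *\<^sub>v u)) \<bullet> u"
    using B u by (simp add: comm_scalar_prod[of u n])
  also have "\<dots> = (B *\<^sub>v u) \<bullet> (B *\<^sub>v u)"
    by (rule transpose_vec_mult_scalar[OF B u]) (use B u in auto)
  finally show ?thesis .
qed

lemma gram_symmetric:
  fixes B :: "real mat"
  assumes "B \<in> carrier_mat n n"
  shows "transpose_mat (transpose_mat B * B) = transpose_mat B * B"
  using assms by (simp add: transpose_mult[of _ n n _ n])

lemma nonsingular_mult_vec_nonzero:
  fixes B :: "real mat"
  assumes "B \<in> carrier_mat n n" "Determinant.det B \<noteq> 0" "u \<in> carrier_vec n" "u \<noteq> 0\<^sub>v n"
  shows "B *\<^sub>v u \<noteq> 0\<^sub>v n"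
  using det_0_iff_vec_prod_zero assms by blast

lemma gram_min_eigenvalue_pos:
  fixes B :: "real mat"
  assumes B: "B \<in> carrier_mat n n" and det: "Determinant.det B \<noteq> 0" and n: "n \<ge> 1"
  shows "min_eigenvalue (transpose_mat B * B) > 0"
proof -
  let ?G = "transpose_mat B * B"
  have G: "?G \<in> carrier_mat n n" using B by simp
  obtain u where u: "u \<in> carrier_vec n" "u \<noteq> 0\<^sub>v n" "?G *\<^sub>v u = min_eigenvalue ?G \<cdot>\<^sub>v u"
    using min_eigenvalue_rayleigh(1)[OF G gram_symmetric[OF B] n] G
    unfolding eigenvalue_def eigenvector_def by auto
  have "min_eigenvalue ?G * (u \<bullet> u) = u \<bullet> (?G *\<^sub>v u)" unfolding u(3) using u by simp
  also have "\<dots> = (B *\<^sub>v u) \<bullet> (B *\<^sub>v u)" by (rule gram_quad_form[OF B u(1)])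
  also have "\<dots> > 0"
    using scalar_prod_self_pos[of "B *\<^sub>v u" n] nonsingular_mult_vec_nonzero[OF B det u(1,2)] B u(1)
    by auto
  finally show ?thesis using scalar_prod_self_pos[OF u(1,2)] by (simp add: zero_less_mult_iff)
qed

text \<open>For nonsingular \<open>B\<close>, every eigenvalue of \<open>B B\<^sup>T\<close> is one of \<open>B\<^sup>T B\<close>:
  if \<open>B B\<^sup>T w = \<mu> w\<close> then \<open>B\<^sup>T w \<noteq> 0\<close> is an eigenvector of \<open>B\<^sup>T B\<close>.\<close>
lemma eigenvalue_gram_swap:
  fixes B :: "real mat"
  assumes B: "B \<in> carrier_mat n n" and det: "Determinant.det B \<noteq> 0"
    and eig: "eigenvalue (B * transpose_mat B) \<mu>"
  shows "eigenvalue (transpose_mat B * B) \<mu>"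
proof -
  let ?C = "transpose_mat B"
  have C: "?C \<in> carrier_mat n n" using B by simp
  have detC: "Determinant.det ?C \<noteq> 0" using det Determinant.det_transpose[OF B] by simp
  obtain w where w: "w \<in> carrier_vec n" "w \<noteq> 0\<^sub>v n" "(B * ?C) *\<^sub>v w = \<mu> \<cdot>\<^sub>v w"
    using eig B unfolding eigenvalue_def eigenvector_def by auto
  have "(?C * B) *\<^sub>v (?C *\<^sub>v w) = ?C *\<^sub>v ((B * ?C) *\<^sub>v w)"
    using B w by (simp add: assoc_mult_mat[of _ n n _ n _ n, symmetric])
  also have "\<dots> = \<mu> \<cdot>\<^sub>v (?C *\<^sub>v w)" unfolding w(3) using C w by (simp add: mult_mat_vec)
  finally show ?thesis
    unfolding eigenvalue_def eigenvector_def
    using nonsingular_mult_vec_nonzero[OF C detC w(1,2)] B w(1)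
    by (intro exI[of _ "?C *\<^sub>v w"]) auto
qed

lemma gram_transpose_lower_bound:
  fixes B :: "real mat"
  assumes B: "B \<in> carrier_mat n n" and det: "Determinant.det B \<noteq> 0" and n: "n \<ge> 1"
    and y: "y \<in> carrier_vec n"
  shows "min_eigenvalue (transpose_mat B * B) * (y \<bullet> y)
           \<le> (transpose_mat B *\<^sub>v y) \<bullet> (transpose_mat B *\<^sub>v y)"
proof -
  let ?C = "transpose_mat B"
  let ?H = "B * ?C"
  have C: "?C \<in> carrier_mat n n" using B by simp
  have H_gram: "?H = transpose_mat ?C * ?C" by simp
  have H: "?H \<in> carrier_mat n n" using B by simp
  have symH: "transpose_mat ?H = ?H" using gram_symmetric[OF C] by simp
  have "eigenvalue (transpose_mat B * B) (min_eigenvalue ?H)"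
    by (rule eigenvalue_gram_swap[OF B det min_eigenvalue_rayleigh(1)[OF H symH n]])
  hence "min_eigenvalue (transpose_mat B * B) \<le> min_eigenvalue ?H"
    using B by (intro min_eigenvalue_le[of _ n]) auto
  hence "min_eigenvalue (transpose_mat B * B) * (y \<bullet> y) \<le> min_eigenvalue ?H * (y \<bullet> y)"
    using y by (intro mult_right_mono) (simp_all add: sq_norm_vec sq_norm_nonneg)
  also have "\<dots> \<le> y \<bullet> (?H *\<^sub>v y)" by (rule min_eigenvalue_rayleigh(2)[OF H symH n y])
  also have "\<dots> = (?C *\<^sub>v y) \<bullet> (?C *\<^sub>v y)" unfolding H_gram by (rule gram_quad_form[OF C y])
  finally show ?thesis .
qed

section \<open>The Jordan totient\<close>

lemma divisor_sum_coprime_product: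
  fixes a b :: nat and f :: "nat \<Rightarrow> real"
  assumes cop: "coprime a b" and a: "a > 0" and b: "b > 0"
  shows "(\<Sum>d | d dvd a * b. f d) = (\<Sum>x | x dvd a. \<Sum>y | y dvd b. f (x * y))"
proof -
  let ?g = "\<lambda>(x, y). x * (y::nat)"
  let ?D = "{x. x dvd a} \<times> {y. y dvd b}"
  have inj: "inj_on ?g ?D"
  proof (rule inj_onI, clarsimp)
    fix x y x' y' assume "x dvd a" "y dvd b" "x' dvd a" "y' dvd b" and eq: "x * y = x' * y'"
    hence "coprime x y'" "coprime x' y" using cop by (meson coprime_divisors)+
    hence "x dvd x'" "x' dvd x" using eq by (metis coprime_dvd_mult_left_iff dvd_triv_left)+
    hence "x = x'" by (rule dvd_antisym)
    moreover have "x > 0" using \<open>x dvd a\<close> a by (metis dvd_0_left_iff gr0I)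
    ultimately show "x = x' \<and> y = y'" using eq by simp
  qed
  have "?g ` ?D = {d. d dvd a * b}"
    by (auto intro: mult_dvd_mono elim!: dvd_productE)
  hence "(\<Sum>d | d dvd a * b. f d) = (\<Sum>p\<in>?D. f (?g p))"
    using sum.reindex[OF inj, of f] by simp
  also have "\<dots> = (\<Sum>x | x dvd a. \<Sum>y | y dvd b. f (x * y))"
    by (simp add: sum.cartesian_product case_prod_beta)
  finally show ?thesis .
qed

lemma Jordan_tot_mult:
  fixes x y :: nat
  assumes cop: "coprime x y" and x: "x > 0" and y: "y > 0"
  shows "Jordan_tot s (x * y) = Jordan_tot s x * Jordan_tot s y"
proof -
  have disj: "prime_factors x \<inter> prime_factors y = {}"
    using cop by (auto simp: in_prime_factors_iff dest: coprime_common_divisor not_prime_unit)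
  have "(\<Prod>p\<in>prime_factors (x * y). 1 - real p powr (-s)) =
     (\<Prod>p\<in>prime_factors x. 1 - real p powr (-s)) * (\<Prod>p\<in>prime_factors y. 1 - real p powr (-s))"
    using x y disj by (simp add: prime_factors_product prod.union_disjoint)
  thus ?thesis unfolding Jordan_tot_def by (simp add: powr_mult algebra_simps)
qed

text \<open>On prime powers \<open>J\<^sub>s(p\<^sup>e\<^sup>+\<^sup>1) = p\<^sup>(\<^sup>e\<^sup>+\<^sup>1\<^sup>)\<^sup>s - p\<^sup>e\<^sup>s\<close>, so the divisor sum telescopes.\<close>
lemma Jordan_tot_prime_power:
  assumes p: "prime (p::nat)"
  shows "Jordan_tot s (p ^ Suc e) = real (p ^ Suc e) powr s - real (p ^ e) powr s"
proof -
  have "prime_factors (p ^ Suc e) = {p}" by (subst prime_factorization_prime_power[OF p]) simp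
  moreover have "real p powr s * real p powr (-s) = 1"
    using prime_gt_0_nat[OF p] by (simp add: powr_add [symmetric])
  ultimately show ?thesis unfolding Jordan_tot_def by (simp add: powr_mult algebra_simps)
qed

lemma Jordan_tot_prime_power_divisor_sum:
  assumes p: "prime (p::nat)"
  shows "(\<Sum>d | d dvd p ^ e. Jordan_tot s d) = real (p ^ e) powr s"
proof -
  have "{d. d dvd p ^ e} = (\<lambda>k. p ^ k) ` {..e}" using divides_primepow_nat[OF p] by auto
  moreover have "inj_on (\<lambda>k. p ^ k) {..e}"
    using prime_gt_1_nat[OF p] by (auto simp: inj_on_def power_inject_exp)
  moreover have "(\<Sum>k\<le>e. Jordan_tot s (p ^ k)) = real (p ^ e) powr s"
  proof (induction e)
    case 0 show ?case by (simp add: Jordan_tot_def)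
  next
    case (Suc e) thus ?case using Jordan_tot_prime_power[OF p, of s e] by simp
  qed
  ultimately show ?thesis by (simp add: sum.reindex)
qed

text \<open>The defining property of \<open>J\<^sub>s\<close>: \<open>\<Sum>\<^bsub>d | m\<^esub> J\<^sub>s(d) = m\<^sup>s\<close>; it is proved by splitting off
  the full power of one prime factor and using multiplicativity.\<close>
lemma Jordan_tot_divisor_sum:
  fixes m :: nat
  assumes "m > 0"
  shows "(\<Sum>d | d dvd m. Jordan_tot s d) = real m powr s"
  using assms
proof (induction m rule: less_induct)
  case (less m)
  show ?case
  proof (cases "m = 1")
    case True thus ?thesis by (simp add: Jordan_tot_def)
  next
    case False
    then obtain p where p: "prime p" "p dvd m" using less.prems prime_factor_nat[of m] by auto
    obtain b where "m = p ^ multiplicity p m * b" and "\<not> p dvd b"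
      using multiplicity_decompose'[of m p] less.prems p(1) not_prime_unit by blast
    define q where "q = p ^ multiplicity p m"
    have m: "m = q * b" using \<open>m = p ^ multiplicity p m * b\<close> by (simp add: q_def)
    have cop: "coprime q b" using \<open>\<not> p dvd b\<close> p(1) by (simp add: q_def prime_imp_coprime)
    have "multiplicity p m > 0"
      using p less.prems by (simp add: prime_multiplicity_gt_zero_iff prime_elem_nat_iff)
    hence "q > 1" unfolding q_def using prime_gt_1_nat[OF p(1)] by (intro one_less_power) auto
    moreover have "b > 0" using m less.prems by (metis gr0I mult_0_right)
    ultimately have "b < m" "q > 0" unfolding m by simp_all
    have "(\<Sum>d | d dvd m. Jordan_tot s d) = (\<Sum>x | x dvd q. \<Sum>y | y dvd b. Jordan_tot s (x * y))"
      unfolding m using divisor_sum_coprime_product[OF cop \<open>q > 0\<close> \<open>b > 0\<close>] .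
    also have "\<dots> = (\<Sum>x | x dvd q. \<Sum>y | y dvd b. Jordan_tot s x * Jordan_tot s y)"
    proof (intro sum.cong refl)
      fix x y assume "x \<in> {x. x dvd q}" "y \<in> {y. y dvd b}"
      hence "x dvd q" "y dvd b" by simp_all
      hence "coprime x y" "x > 0" "y > 0"
        using cop \<open>q > 0\<close> \<open>b > 0\<close> by (auto intro: coprime_divisors dvd_pos_nat)
      thus "Jordan_tot s (x * y) = Jordan_tot s x * Jordan_tot s y" by (rule Jordan_tot_mult)
    qed
    also have "\<dots> = real q powr s * real b powr s"
      using Jordan_tot_prime_power_divisor_sum[OF p(1)] less.IH[OF \<open>b < m\<close> \<open>b > 0\<close>]
      by (simp add: sum_product [symmetric] q_def)
    finally show ?thesis using m by (simp add: powr_mult)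
  qed
qed

text \<open>For \<open>s > 0\<close> every factor \<open>1 - p\<^sup>-\<^sup>s\<close> is positive, hence so is \<open>J\<^sub>s\<close> and its minimum on \<open>{1..n}\<close>.\<close>
lemma Jordan_tot_pos:
  assumes s: "s > 0" and d: "d > 0"
  shows "Jordan_tot s d > 0"
proof -
  have "0 < 1 - real p powr (-s)" if "p \<in> prime_factors d" for p
    using that s prime_gt_1_nat[of p] by (auto intro: powr_less_one simp: in_prime_factors_iff)
  hence "(\<Prod>p\<in>prime_factors d. 1 - real p powr (-s)) > 0" by (rule prod_pos)
  thus ?thesis using d unfolding Jordan_tot_def by simp
qed

lemma min_Jordan_tot_pos:
  assumes "n \<ge> 1" "s > 0"
  shows "(MIN i\<in>{1..n}. Jordan_tot s i) > 0"
  using assms Jordan_tot_pos by (subst Min_gr_iff) auto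

section \<open>The GCD-LCM matrix\<close>

lemma A_mat_carrier: "A_mat n \<alpha> \<beta> \<in> carrier_mat n n"
  unfolding A_mat_def by simp

lemma A_mat_symmetric: "transpose_mat (A_mat n \<alpha> \<beta>) = A_mat n \<alpha> \<beta>"
  by (rule eq_matI) (auto simp: A_mat_def gcd.commute lcm.commute)

lemma E_mat_carrier: "E_mat n \<in> carrier_mat n n"
  unfolding E_mat_def by simp

text \<open>\<open>E\<^sub>n\<close> is lower unitriangular, since \<open>j | i\<close> forces \<open>j \<le> i\<close>.\<close>
lemma E_mat_det: "Determinant.det (E_mat n) = 1"
proof -
  have "Determinant.det (E_mat n) = prod_list (diag_mat (E_mat n))"
  proof (rule det_lower_triangular[OF _ E_mat_carrier])
    fix i j assume "i < j" "j < n"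
    hence "\<not> (j + 1) dvd (i + 1)" using dvd_imp_le[of "j + 1" "i + 1"] by auto
    thus "E_mat n $$ (i, j) = 0" using \<open>i < j\<close> \<open>j < n\<close> unfolding E_mat_def by simp
  qed
  also have "diag_mat (E_mat n) = map (\<lambda>_. 1) [0..<n]" unfolding diag_mat_def E_mat_def by simp
  also have "prod_list (map (\<lambda>_. 1::real) [0..<n]) = 1" by (induction n) auto
  finally show ?thesis .
qed

lemma t_min_pos:
  assumes "n \<ge> 1"
  shows "t_min n > 0"
  unfolding t_min_def by (rule gram_min_eigenvalue_pos[OF E_mat_carrier _ assms]) (simp add: E_mat_det)

text \<open>\<open>(a,b)\<^sup>\<alpha> [a,b]\<^sup>\<beta> = a\<^sup>\<beta> b\<^sup>\<beta> (a,b)\<^sup>\<alpha>\<^sup>-\<^sup>\<beta>\<close>, from \<open>(a,b) [a,b] = a b\<close>.\<close>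
lemma gcd_lcm_powr:
  fixes a b :: nat
  assumes "a > 0" "b > 0"
  shows "real (gcd a b) powr \<alpha> * real (lcm a b) powr \<beta>
           = real a powr \<beta> * real b powr \<beta> * real (gcd a b) powr (\<alpha> - \<beta>)"
proof -
  have g: "real (gcd a b) > 0" using assms by simp
  have "real (gcd a b) powr \<beta> * real (lcm a b) powr \<beta> = real a powr \<beta> * real b powr \<beta>"
    by (metis of_nat_mult prod_gcd_lcm_nat of_nat_0_le_iff powr_mult)
  thus ?thesis using g by (simp add: powr_diff field_simps)
qed

text \<open>Entrywise factorisation \<open>A = \<Lambda> E D E\<^sup>T \<Lambda>\<close> with \<open>\<Lambda> = diag(i\<^sup>\<beta>)\<close> and
  \<open>D = diag(J\<^bsub>\<alpha>-\<beta>\<^esub>(d))\<close>: it comes from \<open>(i,j)\<^sup>\<alpha>[i,j]\<^sup>\<beta> = i\<^sup>\<beta> j\<^sup>\<beta> (i,j)\<^sup>\<alpha>\<^sup>-\<^sup>\<beta>\<close> and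
  \<open>(i,j)\<^sup>\<alpha>\<^sup>-\<^sup>\<beta> = \<Sum>\<^bsub>d | i, d | j\<^esub> J\<^bsub>\<alpha>-\<beta>\<^esub>(d)\<close>.\<close>
lemma A_mat_entry:
  assumes i: "i < n" and j: "j < n"
  shows "A_mat n \<alpha> \<beta> $$ (i, j) = real (i + 1) powr \<beta> * real (j + 1) powr \<beta> *
     (\<Sum>d\<in>{1..n}. if d dvd (i + 1) \<and> d dvd (j + 1) then Jordan_tot (\<alpha> - \<beta>) d else 0)"
proof -
  define g where "g = gcd (i + 1) (j + 1)"
  have "real g powr (\<alpha> - \<beta>) = (\<Sum>d | d dvd g. Jordan_tot (\<alpha> - \<beta>) d)"
    by (rule Jordan_tot_divisor_sum [symmetric]) (simp add: g_def)
  also have "{d. d dvd g} = {d \<in> {1..n}. d dvd (i + 1) \<and> d dvd (j + 1)}"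
    using i by (auto simp: g_def Suc_le_eq intro: dvd_pos_nat dest: dvd_imp_le)
  also have "(\<Sum>d\<in>\<dots>. Jordan_tot (\<alpha> - \<beta>) d)
      = (\<Sum>d\<in>{1..n}. if d dvd (i + 1) \<and> d dvd (j + 1) then Jordan_tot (\<alpha> - \<beta>) d else 0)"
    by (rule sum.inter_filter) simp
  finally have "real g powr (\<alpha> - \<beta>) = \<dots>" .
  thus ?thesis using i j unfolding g_def by (simp add: A_mat_def gcd_lcm_powr)
qed

lemma A_mat_quad_form:
  fixes x :: "real Matrix.vec"
  assumes x: "x \<in> carrier_vec n"
  shows "x \<bullet> (A_mat n \<alpha> \<beta> *\<^sub>v x) = (\<Sum>d\<in>{1..n}. Jordan_tot (\<alpha> - \<beta>) d *
      (\<Sum>i<n. if d dvd (i + 1) then real (i + 1) powr \<beta> * x $ i else 0)\<^sup>2)"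
proof -
  define c where "c d i = (if d dvd (i + 1) then real (i + 1) powr \<beta> * x $ i else 0)" for d i
  define J where "J d = Jordan_tot (\<alpha> - \<beta>) d" for d
  have "x \<bullet> (A_mat n \<alpha> \<beta> *\<^sub>v x) = (\<Sum>i<n. \<Sum>j<n. x $ i * A_mat n \<alpha> \<beta> $$ (i, j) * x $ j)"
    using quad_form_mat[OF A_mat_carrier x] by (simp add: quad_form_def)
  also have "\<dots> = (\<Sum>i<n. \<Sum>j<n. \<Sum>d\<in>{1..n}. J d * (c d i * c d j))"
    by (intro sum.cong refl)
      (auto simp: A_mat_entry sum_distrib_left sum_distrib_right c_def J_def intro!: sum.cong)
  also have "\<dots> = (\<Sum>i<n. \<Sum>d\<in>{1..n}. \<Sum>j<n. J d * (c d i * c d j))"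
    by (intro sum.cong refl sum.swap)
  also have "\<dots> = (\<Sum>d\<in>{1..n}. \<Sum>i<n. \<Sum>j<n. J d * (c d i * c d j))"
    by (rule sum.swap)
  also have "\<dots> = (\<Sum>d\<in>{1..n}. J d * (\<Sum>i<n. c d i)\<^sup>2)"
  proof (intro sum.cong refl)
    fix d
    have "(\<Sum>i<n. c d i)\<^sup>2 = (\<Sum>i<n. \<Sum>j<n. c d i * c d j)"
      by (simp only: power2_eq_square sum_product)
    thus "(\<Sum>i<n. \<Sum>j<n. J d * (c d i * c d j)) = J d * (\<Sum>i<n. c d i)\<^sup>2"
      by (simp add: sum_distrib_left)
  qed
  finally show ?thesis unfolding c_def J_def .
qed

lemma E_transpose_sq_norm:
  "(transpose_mat (E_mat n) *\<^sub>v Matrix.vec n y) \<bullet> (transpose_mat (E_mat n) *\<^sub>v Matrix.vec n y)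
     = (\<Sum>d\<in>{1..n}. (\<Sum>i<n. if d dvd (i + 1) then y i else 0)\<^sup>2)"
proof -
  have component: "(transpose_mat (E_mat n) *\<^sub>v Matrix.vec n y) $ k
                     = (\<Sum>i<n. if Suc k dvd (i + 1) then y i else 0)" if "k < n" for k
    using that unfolding E_mat_def by (auto simp: scalar_prod_def atLeast0LessThan intro!: sum.cong)
  have "transpose_mat (E_mat n) *\<^sub>v Matrix.vec n y \<in> carrier_vec n"
    using E_mat_carrier[of n] by simp
  thus ?thesis
    by (simp add: sq_norm_vec sq_norm_def component sum.atLeast1_atMost_eq)
qed

lemma powr_weight_lower_bound:
  assumes "1 \<le> k" "k \<le> n"
  shows "min 1 (real n powr (2 * \<beta>)) \<le> (real k powr \<beta>)\<^sup>2"
proof -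
  have "(real k powr \<beta>)\<^sup>2 = real k powr (2 * \<beta>)"
    by (simp add: power2_eq_square powr_add [symmetric])
  moreover have "min 1 (real n powr (2 * \<beta>)) \<le> real k powr (2 * \<beta>)"
  proof (cases "\<beta> \<ge> 0")
    case True thus ?thesis using assms by (simp add: ge_one_powr_ge_zero)
  next
    case False
    hence "real n powr (2 * \<beta>) \<le> real k powr (2 * \<beta>)" using assms by (intro powr_mono2') auto
    thus ?thesis by simp
  qed
  ultimately show ?thesis by simp
qed

text \<open>The key estimate: with \<open>y\<^sub>i = i\<^sup>\<beta> x\<^sub>i\<close>,
  \<open>x\<^sup>T A x = \<Sum>\<^sub>d J(d) (E\<^sup>T y)\<^sub>d\<^sup>2 \<ge> min J \<cdot> \<parallel>E\<^sup>T y\<parallel>\<^sup>2 \<ge> min J \<cdot> t\<^sub>n \<parallel>y\<parallel>\<^sup>2 \<ge> min J \<cdot> t\<^sub>n \<cdot> min(1, n\<^sup>2\<^sup>\<beta>) \<parallel>x\<parallel>\<^sup>2\<close>.\<close>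
lemma A_mat_rayleigh_lower_bound:
  fixes x :: "real Matrix.vec"
  assumes n: "n \<ge> 1" and \<alpha>\<beta>: "\<alpha> > \<beta>" and x: "x \<in> carrier_vec n"
  shows "t_min n * (MIN i\<in>{1..n}. Jordan_tot (\<alpha> - \<beta>) i) * min 1 (real n powr (2 * \<beta>)) * (x \<bullet> x)
           \<le> x \<bullet> (A_mat n \<alpha> \<beta> *\<^sub>v x)"
proof -
  define mJ where "mJ = (MIN i\<in>{1..n}. Jordan_tot (\<alpha> - \<beta>) i)"
  define w where "w = min 1 (real n powr (2 * \<beta>))"
  define y where "y i = real (i + 1) powr \<beta> * x $ i" for i
  define S where "S d = (\<Sum>i<n. if d dvd (i + 1) then y i else 0)" for d
  note E = E_mat_carrier[of n]
  have t: "t_min n > 0" using t_min_pos[OF n] .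
  have mJ: "mJ > 0" unfolding mJ_def using min_Jordan_tot_pos n \<alpha>\<beta> by simp
  have "mJ * (\<Sum>d\<in>{1..n}. (S d)\<^sup>2) = (\<Sum>d\<in>{1..n}. mJ * (S d)\<^sup>2)" by (simp add: sum_distrib_left)
  also have "\<dots> \<le> (\<Sum>d\<in>{1..n}. Jordan_tot (\<alpha> - \<beta>) d * (S d)\<^sup>2)"
    unfolding mJ_def by (intro sum_mono mult_right_mono Min_le) auto
  also have "\<dots> = x \<bullet> (A_mat n \<alpha> \<beta> *\<^sub>v x)" unfolding A_mat_quad_form[OF x] S_def y_def ..
  finally have J_step: "mJ * (\<Sum>d\<in>{1..n}. (S d)\<^sup>2) \<le> x \<bullet> (A_mat n \<alpha> \<beta> *\<^sub>v x)" .
  have "t_min n * sq_norm n y \<le> (\<Sum>d\<in>{1..n}. (S d)\<^sup>2)"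
    using gram_transpose_lower_bound[OF E _ n, of "Matrix.vec n y"]
    by (simp add: E_mat_det E_transpose_sq_norm S_def t_min_def sq_norm_vec sq_norm_def)
  moreover have "w * (x \<bullet> x) \<le> sq_norm n y"
    unfolding sq_norm_vec[OF x] sq_norm_def sum_distrib_left y_def power_mult_distrib w_def
    by (intro sum_mono mult_right_mono powr_weight_lower_bound) auto
  ultimately have "t_min n * (w * (x \<bullet> x)) \<le> (\<Sum>d\<in>{1..n}. (S d)\<^sup>2)"
    using t by (meson mult_left_mono order_trans less_imp_le)
  hence "mJ * (t_min n * (w * (x \<bullet> x))) \<le> x \<bullet> (A_mat n \<alpha> \<beta> *\<^sub>v x)"
    using J_step mJ by (meson mult_left_mono order_trans less_imp_le)
  thus ?thesis by (simp add: mJ_def w_def mult_ac)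
qed

theorem theorem3p1:
  fixes n :: nat and \<alpha> \<beta> :: real
  assumes "n \<ge> 1" and "\<alpha> > \<beta>"
  shows "symmetric_mat (A_mat n \<alpha> \<beta>) \<and> pos_def_mat (A_mat n \<alpha> \<beta>) \<and>
         min_eigenvalue (A_mat n \<alpha> \<beta>)
           \<ge> t_min n * (MIN i\<in>{1..n}. Jordan_tot (\<alpha> - \<beta>) i) * min 1 (real n powr (2 * \<beta>)) \<and>
         t_min n * (MIN i\<in>{1..n}. Jordan_tot (\<alpha> - \<beta>) i) * min 1 (real n powr (2 * \<beta>)) > 0"
proof -
  let ?A = "A_mat n \<alpha> \<beta>"
  define c where "c = t_min n * (MIN i\<in>{1..n}. Jordan_tot (\<alpha> - \<beta>) i) * min 1 (real n powr (2 * \<beta>))"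
  have c_pos: "c > 0" unfolding c_def using t_min_pos min_Jordan_tot_pos assms by simp
  have bound: "c * (x \<bullet> x) \<le> x \<bullet> (?A *\<^sub>v x)" if "x \<in> carrier_vec n" for x
    unfolding c_def using A_mat_rayleigh_lower_bound[OF assms that] .
  have sym: "symmetric_mat ?A"
    unfolding symmetric_mat_def using A_mat_carrier[of n \<alpha> \<beta>] A_mat_symmetric by auto
  have "x \<bullet> (?A *\<^sub>v x) > 0" if "x \<in> carrier_vec n" "x \<noteq> 0\<^sub>v n" for x
    using bound[OF that(1)] c_pos scalar_prod_self_pos[OF that] by (smt (verit) mult_pos_pos)
  moreover have "dim_row ?A = n" using A_mat_carrier[of n \<alpha> \<beta>] by simp
  ultimately have "pos_def_mat ?A" using sym by (simp add: pos_def_mat_def)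
  moreover have "c \<le> min_eigenvalue ?A"
    by (rule min_eigenvalue_ge[OF A_mat_carrier A_mat_symmetric assms(1) bound])
  ultimately show ?thesis using sym c_pos by (simp add: c_def)
qed
end
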